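(* If $s\ge4$ and $s$ is even, then $\mathrm{ex}(n,P^{(3)}_s)\ge\left(1-\frac{4}{(s-2)s}+o(1)\right)\binom{n}{3}$, where $o(1)\to0$ as $n\to\infty$ with $s$ fixed.
   Context: An ordered $3$-uniform hypergraph is a $3$-uniform hypergraph with linearly ordered vertex set; $G$ contains $H$ if there is an order-preserving injection $f:V(H)\to V(G)$ with $f(e)\in E(G)$ for all $e\in E(H)$. $\mathrm{ex}(n,H)$ is the maximum number of edges of an $n$-vertex ordered $3$-uniform hypergraph not containing $H$. $P^{(3)}_s$ has vertices $v_1<\dots<v_s$ and edges $\{v_j,v_{j+1},v_{j+2}\}$ for $1\le j\le s-2$. *)

theory Defs
  imports Complex_Main
begin

text \<open>An ordered 3-uniform hypergraph on n vertices: vertex set {0..<n} with the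
  natural order, given by its number of vertices and its edge set.\<close>

type_synonym ohg = "nat \<times> nat set set"

definition hypergraph3 :: "ohg \<Rightarrow> bool" where
  "hypergraph3 G \<longleftrightarrow> (\<forall>e\<in>snd G. e \<subseteq> {..<fst G} \<and> card e = 3)"

definition ocontains :: "ohg \<Rightarrow> ohg \<Rightarrow> bool" where
  "ocontains G H \<longleftrightarrow> (\<exists>f. strict_mono_on {..<fst H} f \<and> f ` {..<fst H} \<subseteq> {..<fst G}
       \<and> (\<forall>e\<in>snd H. f ` e \<in> snd G))"

definition tight_path :: "nat \<Rightarrow> ohg" where
  "tight_path s = (s, {{j, j+1, j+2} | j. j + 2 < s})"

definition ex3 :: "nat \<Rightarrow> ohg \<Rightarrow> nat" where
  "ex3 n H = Max {card E | E. hypergraph3 (n, E) \<and> \<not> ocontains (n, E) H}"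

end

theory Submission
  imports Defs "HOL-Real_Asymp.Real_Asymp"
begin

text \<open>
  Write s = 2m + 2 and cut N = m(m + 1)M vertices into 2m consecutive blocks whose sizes are
  M times the weights w_0, ..., w_(2m-1) = m, 1, m - 1, 2, ..., 1, m. Every pair x < y receives
  a label between the blocks of x and y, and the edges are the triples x < y < z with
  label(x, y) < label(y, z). On a tight path with 2m + 2 vertices the labels of the 2m + 1
  consecutive pairs would increase strictly, which is impossible with 2m labels. A triple
  x < y < z is missing only if x and z lie in windows around y, obtained by transporting the
  position of y in its block linearly onto the previous and the next block. Consecutive weights
  sum alternately to m + 1 and m, so block l loses about M^3 w_l m(m + 1)/6 triples, and
  altogether N^3/(6m(m + 1)) of the N^3/6 triples are missing, a fraction 4/((s - 2)s).
\<close>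

lemma nat_in_real_interval_subset:
  "{x::nat. a \<le> real x \<and> real x < b} \<subseteq> {nat \<lceil>a\<rceil>..<nat \<lceil>b\<rceil>}"
proof
  fix x :: nat assume x: "x \<in> {x. a \<le> real x \<and> real x < b}"
  then have "int x < \<lceil>b\<rceil>" by (simp add: less_ceiling_iff)
  with x show "x \<in> {nat \<lceil>a\<rceil>..<nat \<lceil>b\<rceil>}" by (auto simp: nat_ceiling_le_eq)
qed

lemma finite_nat_in_real_interval: "finite {x::nat. a \<le> real x \<and> real x < b}"
  using nat_in_real_interval_subset by (rule finite_subset) simp

lemma card_nat_in_real_interval_le:
  assumes "a \<le> b"
  shows "real (card {x::nat. a \<le> real x \<and> real x < b}) \<le> b - a + 1"
proof -
  have "card {x::nat. a \<le> real x \<and> real x < b} \<le> nat \<lceil>b\<rceil> - nat \<lceil>a\<rceil>"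
    using card_mono[OF _ nat_in_real_interval_subset] by simp
  also have "real (nat \<lceil>b\<rceil> - nat \<lceil>a\<rceil>) \<le> b - a + 1"
    using assms by linarith
  finally show ?thesis by simp
qed

lemma sum_lessThan_add:
  fixes G :: "nat \<Rightarrow> 'a::comm_monoid_add"
  shows "(\<Sum>y<a + b. G y) = (\<Sum>y<a. G y) + (\<Sum>t<b. G (a + t))"
  by (induction b) (simp_all add: add.assoc)

lemma sum_lessThan_blocks:
  fixes G :: "nat \<Rightarrow> 'a::comm_monoid_add" and f :: "nat \<Rightarrow> nat"
  shows "(\<Sum>y<(\<Sum>k<K. f k). G y) = (\<Sum>l<K. \<Sum>t<f l. G ((\<Sum>k<l. f k) + t))"
  by (induction K) (simp_all add: sum_lessThan_add)

lemma sum_lessThan_of_nat: "(\<Sum>t<N. real t) = real N * (real N - 1) / 2"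
  by (induction N) (simp_all add: field_simps)

lemma sum_lessThan_of_nat_squared:
  "(\<Sum>t<N. real t * real t) = real N * (real N - 1) * (2 * real N - 1) / 6"
  by (induction N) (simp_all add: field_simps)

lemma sum_affine_products_le:
  fixes N :: nat and P Q :: real
  assumes "0 < N" "0 \<le> P" "0 \<le> Q"
  shows "(\<Sum>t<N. (t * (real N + P) / N + 1) * ((real N - t) * (real N + Q) / N))
           \<le> N * (real N + P) * (real N + Q) / 6 + (real N + Q) * (real N + 1) / 2"
proof -
  define a b where "a = (N + P) / N" and "b = (N + Q) / N"
  have "(\<Sum>t<N. real t * (N - real t)) = N * (\<Sum>t<N. real t) - (\<Sum>t<N. real t * real t)"
    by (simp add: sum_subtractf sum_distrib_left algebra_simps)
  then have cubic: "(\<Sum>t<N. real t * (N - real t)) = (real N ^ 3 - N) / 6"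
    by (simp add: sum_lessThan_of_nat sum_lessThan_of_nat_squared field_simps power3_eq_cube)
  have linear: "(\<Sum>t<N. N - real t) = N * (N + 1) / 2"
    by (simp add: sum_subtractf sum_lessThan_of_nat field_simps)
  have "(\<Sum>t<N. (t * (real N + P) / N + 1) * ((real N - t) * (real N + Q) / N))
      = (\<Sum>t<N. a * b * (real t * (N - real t)) + b * (N - real t))"
    unfolding a_def b_def by (intro sum.cong) (auto simp: field_simps)
  also have "\<dots> = a * b * (\<Sum>t<N. real t * (N - real t)) + b * (\<Sum>t<N. N - real t)"
    by (simp add: sum.distrib sum_distrib_left)
  also have "\<dots> = a * b * ((real N ^ 3 - N) / 6) + b * (N * (N + 1) / 2)"
    by (simp only: cubic linear)
  also have "\<dots> \<le> a * b * (real N ^ 3 / 6) + b * (N * (N + 1) / 2)"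
    using assms unfolding a_def b_def by (intro add_mono mult_left_mono) auto
  also have "\<dots> = N * (real N + P) * (real N + Q) / 6 + (real N + Q) * (real N + 1) / 2"
    using assms unfolding a_def b_def by (simp add: field_simps power3_eq_cube)
  finally show ?thesis .
qed

lemma real_choose_three: "real (n choose 3) = real n * (real n - 1) * (real n - 2) / 6"
proof (induction n)
  case (Suc n)
  have "Suc n choose 3 = (n choose 2) + (n choose 3)"
    by (simp add: numeral_3_eq_3 numeral_2_eq_2)
  moreover have "real (n choose 2) = real n * (real n - 1) / 2"
    by (induction n) (simp_all add: numeral_2_eq_2 field_simps)
  ultimately show ?case
    using Suc by (simp add: field_simps)
qed simp

lemma square_over_choose_three_tendsto_zero: "(\<lambda>n. real n ^ 2 / real (n choose 3)) \<longlonglongrightarrow> 0"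
  unfolding real_choose_three by real_asymp

lemma cubic_shift_bound:
  fixes d x y :: real
  assumes "1 \<le> d" "d \<le> x" "x - d \<le> y" "y \<le> x"
  shows "(1 - 1 / d) * (x * (x - 1) * (x - 2) / 6) - (d + 3) * x ^ 2
    \<le> y * (y - 1) * (y - 2) / 6 - y ^ 3 / (6 * d) - 2 * y ^ 2"
proof -
  define q where "q = 1 - 1 / d"
  have "0 \<le> q"
    using assms(1) unfolding q_def by simp
  have "y ^ 3 / 6 - y ^ 2 / 2 \<le> y * (y - 1) * (y - 2) / 6"
    using assms by (simp add: power2_eq_square power3_eq_cube algebra_simps)
  moreover have "y ^ 3 / 6 - y ^ 3 / (6 * d) = q * y ^ 3 / 6"
    unfolding q_def using assms(1) by (simp add: field_simps)
  moreover have "q * x ^ 3 - 3 * (d - 1) * x ^ 2 \<le> q * y ^ 3"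
  proof -
    have "x ^ 3 - 3 * d * x ^ 2 \<le> (x - d) ^ 3"
      using assms by (simp add: power2_eq_square power3_eq_cube algebra_simps)
    also have "\<dots> \<le> y ^ 3"
      using assms by (intro power_mono) simp_all
    finally have "q * (x ^ 3 - 3 * d * x ^ 2) \<le> q * y ^ 3"
      using \<open>0 \<le> q\<close> by (intro mult_left_mono)
    moreover have "q * (x ^ 3 - 3 * d * x ^ 2) = q * x ^ 3 - 3 * (d - 1) * x ^ 2"
      unfolding q_def using assms(1) by (simp add: field_simps)
    ultimately show ?thesis
      by simp
  qed
  moreover have "q * (x * (x - 1) * (x - 2) / 6) \<le> q * x ^ 3 / 6"
  proof -
    have "x * (x - 1) * (x - 2) / 6 \<le> x ^ 3 / 6"
      using assms by (simp add: power2_eq_square power3_eq_cube algebra_simps)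
    then show ?thesis
      using mult_left_mono[OF _ \<open>0 \<le> q\<close>] by fastforce
  qed
  moreover have "y ^ 2 \<le> x ^ 2" "0 \<le> x ^ 2" "x ^ 2 \<le> d * x ^ 2"
    using assms by (simp_all add: power_mono)
  moreover have "(d + 3) * x ^ 2 = d * x ^ 2 + 3 * x ^ 2"
    and "3 * (d - 1) * x ^ 2 = 3 * (d * x ^ 2) - 3 * x ^ 2"
    by (simp_all add: algebra_simps)
  ultimately show ?thesis
    unfolding q_def[symmetric] by argo
qed

section \<open>Pair labellings that increase along edges\<close>

lemma ex3_ge_card:
  assumes "hypergraph3 (n, E)" and "\<not> ocontains (n, E) H"
  shows "card E \<le> ex3 n H"
proof -
  let ?A = "{card E | E. hypergraph3 (n, E) \<and> \<not> ocontains (n, E) H}"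
  have "?A \<subseteq> {..card (Pow {..<n})}"
  proof
    fix k assume "k \<in> ?A"
    then obtain E' where "k = card E'" "E' \<subseteq> Pow {..<n}"
      unfolding hypergraph3_def by auto
    then show "k \<in> {..card (Pow {..<n})}" by (simp add: card_mono)
  qed
  then have "finite ?A" by (rule finite_subset) simp
  moreover have "card E \<in> ?A" using assms by blast
  ultimately show ?thesis unfolding ex3_def by (rule Max_ge)
qed

lemma not_ocontains_tight_path_if_increasing_labels:
  assumes "0 < K"
    and increasing: "\<And>x y z. x < y \<Longrightarrow> y < z \<Longrightarrow> {x, y, z} \<in> E \<Longrightarrow> h x y < h y z \<and> h y z < K"
  shows "\<not> ocontains (n, E) (tight_path (K + 2))"
proof
  assume "ocontains (n, E) (tight_path (K + 2))"
  then obtain f where mono: "strict_mono_on {..<K + 2} f"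
    and edges: "\<forall>e \<in> {{j, j + 1, j + 2} | j. j + 2 < K + 2}. f ` e \<in> E"
    unfolding ocontains_def tight_path_def by auto
  have edge: "{f j, f (j + 1), f (j + 2)} \<in> E" if "j < K" for j
    using bspec[OF edges, of "{j, j + 1, j + 2}"] that by auto
  have step: "h (f j) (f (j + 1)) < h (f (j + 1)) (f (j + 2)) \<and> h (f (j + 1)) (f (j + 2)) < K"
    if "j < K" for j
    using that mono by (intro increasing edge) (auto intro: strict_mono_onD)
  have "j \<le> h (f j) (f (j + 1))" if "j \<le> K" for j
    using that
  proof (induction j)
    case (Suc j)
    then show ?case using step[of j] by simp
  qed simp
  from this[of K] show False using step[of "K - 1"] \<open>0 < K\<close> by simp
qed

definition nonincreasing_triples :: "nat \<Rightarrow> (nat \<Rightarrow> nat \<Rightarrow> nat) \<Rightarrow> (nat \<times> nat \<times> nat) set" where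
  "nonincreasing_triples n h = {(x, y, z). x < y \<and> y < z \<and> z < n \<and> h y z \<le> h x y}"

definition increasing_edges :: "nat \<Rightarrow> (nat \<Rightarrow> nat \<Rightarrow> nat) \<Rightarrow> nat set set" where
  "increasing_edges n h =
     {e. e \<subseteq> {..<n} \<and> card e = 3} - (\<lambda>(x, y, z). {x, y, z}) ` nonincreasing_triples n h"

lemma increasing_edgesD:
  assumes "x < y" "y < z" "{x, y, z} \<in> increasing_edges n h"
  shows "h x y < h y z" "z < n"
proof -
  show "z < n" using assms unfolding increasing_edges_def by auto
  then have "(x, y, z) \<notin> nonincreasing_triples n h"
    using assms(3) unfolding increasing_edges_def by (auto simp: image_iff)
  then show "h x y < h y z"
    using assms(1,2) \<open>z < n\<close> unfolding nonincreasing_triples_def by auto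
qed

lemma hypergraph3_increasing_edges:
  "n \<le> n' \<Longrightarrow> hypergraph3 (n', increasing_edges n h)"
  unfolding hypergraph3_def increasing_edges_def by auto

lemma card_increasing_edges_ge:
  "real (n choose 3) - real (card (nonincreasing_triples n h))
    \<le> real (card (increasing_edges n h))"
proof -
  let ?A = "{e. e \<subseteq> {..<n} \<and> card e = 3}"
  let ?B = "(\<lambda>(x, y, z). {x, y, z}) ` nonincreasing_triples n h"
  have fin: "finite (nonincreasing_triples n h)"
    by (rule finite_subset[of _ "{..<n} \<times> {..<n} \<times> {..<n}"])
      (auto simp: nonincreasing_triples_def)
  have "card ?A - card ?B \<le> card (?A - ?B)"
    using fin by (intro diff_card_le_card_Diff) simp
  moreover have "card ?B \<le> card (nonincreasing_triples n h)"
    using fin by (rule card_image_le)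
  moreover have "card ?A = n choose 3"
    using n_subsets[of "{..<n}" 3] by simp
  ultimately show ?thesis
    unfolding increasing_edges_def by linarith
qed

lemma card_triples_le_sum_windows:
  fixes T :: "(nat \<times> nat \<times> nat) set"
  assumes "\<And>y. finite (X y)" "\<And>y. finite (Z y)"
    and "\<And>x y z. (x, y, z) \<in> T \<Longrightarrow> y < n \<and> x \<in> X y \<and> z \<in> Z y"
  shows "card T \<le> (\<Sum>y<n. card (X y) * card (Z y))"
proof -
  let ?W = "SIGMA y:{..<n}. X y \<times> Z y"
  have "T \<subseteq> (\<lambda>(y, x, z). (x, y, z)) ` ?W"
    using assms(3) by force
  moreover have fin: "finite ?W" using assms(1,2) by auto
  ultimately have "card T \<le> card ((\<lambda>(y, x, z). (x, y, z)) ` ?W)"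
    by (intro card_mono) auto
  also have "\<dots> \<le> card ?W" using fin by (rule card_image_le)
  also have "\<dots> = (\<Sum>y<n. card (X y) * card (Z y))"
    using assms(1,2) by (simp add: card_cartesian_product)
  finally show ?thesis .
qed

section \<open>The block construction\<close>

locale path_free_construction =
  fixes m M :: nat
  assumes m_pos: "0 < m" and M_pos: "0 < M"
begin

definition weight :: "nat \<Rightarrow> nat" where
  "weight l = (if even l then m - l div 2 else l div 2 + 1)"

definition block_size :: "nat \<Rightarrow> nat" where
  "block_size l = weight l * M"

definition block_start :: "nat \<Rightarrow> nat" where
  "block_start l = (\<Sum>k<l. block_size k)"

definition nverts :: nat where
  "nverts = block_start (2 * m)"

definition block :: "nat \<Rightarrow> nat" where
  "block v = Max {l. l < 2 * m \<and> block_start l \<le> v}"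

definition offset :: "nat \<Rightarrow> nat" where
  "offset v = v - block_start (block v)"

definition prev_block_size :: "nat \<Rightarrow> nat" where
  "prev_block_size l = (if l = 0 then 0 else block_size (l - 1))"

text \<open>The relative position of v in its block, transported linearly onto the previous block
  (lo v) and onto the next block (hi v).\<close>

definition lo :: "nat \<Rightarrow> real" where
  "lo v = block_start (block v) - offset v * prev_block_size (block v) / block_size (block v)"

definition hi :: "nat \<Rightarrow> real" where
  "hi v = block_start (Suc (block v))
     + (block_size (block v) - offset v) * block_size (Suc (block v)) / block_size (block v)"

definition label :: "nat \<Rightarrow> nat \<Rightarrow> nat" where
  "label x y = (if lo y \<le> x then block y else if y < hi x then block x else Suc (block x))"

lemma weight_pos: "l < 2 * m \<Longrightarrow> 0 < weight l"
  unfolding weight_def by auto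

lemma weight_adjacent_le: "l < 2 * m \<Longrightarrow> weight l + weight (Suc l) \<le> m + 1"
  unfolding weight_def by auto

lemma weight_neighbours_product:
  assumes "l < 2 * m"
  shows "(weight l + (if l = 0 then 0 else weight (l - 1))) * (weight l + weight (Suc l))
    = m * (m + 1)"
proof (cases "even l")
  case True
  then obtain i where "l = 2 * i" by blast
  with assms show ?thesis unfolding weight_def by (cases i) auto
next
  case False
  then obtain i where "l = 2 * i + 1" using oddE by blast
  with assms show ?thesis unfolding weight_def by (auto simp: algebra_simps)
qed

lemma sum_weight: "k \<le> m \<Longrightarrow> (\<Sum>l<2 * k. weight l) = k * (m + 1)"
proof (induction k)
  case (Suc k)
  have "2 * Suc k = Suc (Suc (2 * k))" by simp
  then show ?case using Suc unfolding weight_def by simp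
qed simp

lemma nverts_eq: "nverts = m * (m + 1) * M"
  using sum_weight[of m] unfolding nverts_def block_start_def block_size_def
  by (simp flip: sum_distrib_right)

lemma block_size_pos: "l < 2 * m \<Longrightarrow> 0 < block_size l"
  using weight_pos M_pos unfolding block_size_def by simp

lemma block_start_Suc: "block_start (Suc l) = block_start l + block_size l"
  unfolding block_start_def by simp

lemma block_start_mono: "l \<le> l' \<Longrightarrow> block_start l \<le> block_start l'"
  unfolding block_start_def by (rule sum_mono2) auto

lemma block_less_2m: "block v < 2 * m" and block_start_block_le: "block_start (block v) \<le> v"
proof -
  have "block v \<in> {l. l < 2 * m \<and> block_start l \<le> v}"
    unfolding block_def using m_pos
    by (intro Max_in) (auto simp: block_start_def intro!: exI[of _ 0])
  then show "block v < 2 * m" "block_start (block v) \<le> v" by auto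
qed

lemma block_ge: "l < 2 * m \<Longrightarrow> block_start l \<le> v \<Longrightarrow> l \<le> block v"
  unfolding block_def by (rule Max_ge) auto

lemma block_mono: "u \<le> v \<Longrightarrow> block u \<le> block v"
  using block_ge block_less_2m block_start_block_le order_trans by blast

lemma less_block_start_Suc_block: "v < nverts \<Longrightarrow> v < block_start (Suc (block v))"
proof (rule ccontr)
  assume "v < nverts" "\<not> v < block_start (Suc (block v))"
  moreover have "Suc (block v) < 2 * m \<Longrightarrow> Suc (block v) \<le> block v"
    using calculation by (intro block_ge) auto
  ultimately show False
    using block_less_2m[of v] unfolding nverts_def by (cases "Suc (block v) = 2 * m") auto
qed

lemma block_less: "v < block_start l \<Longrightarrow> block v < l"
  using block_start_block_le[of v] block_start_mono[of l "block v"] by linarith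

lemma block_ge_nverts: "block_start l \<le> v \<Longrightarrow> v < nverts \<Longrightarrow> l \<le> block v"
  using less_block_start_Suc_block[of v] block_start_mono[of "Suc (block v)" l] by linarith

lemma block_eq: "l < 2 * m \<Longrightarrow> block_start l \<le> v \<Longrightarrow> v < block_start (Suc l) \<Longrightarrow> block v = l"
  using block_ge[of l v] block_less[of v "Suc l"] by simp

lemma offset_less: "v < nverts \<Longrightarrow> offset v < block_size (block v)"
  using less_block_start_Suc_block[of v] block_start_block_le[of v]
  unfolding offset_def block_start_Suc by linarith

lemma lo_le: "lo v \<le> block_start (block v)"
  unfolding lo_def by simp

lemma hi_ge: "block_start (Suc (block v)) \<le> hi v"
  unfolding hi_def by simp

lemma lo_hi_inverse:
  assumes "real x < lo y" "y < nverts" "block y = Suc (block x)"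
  shows "real y < hi x"
proof -
  define l N N' t t' where "l = block x" and "N = block_size l" and "N' = block_size (Suc l)"
    and "t = offset x" and "t' = offset y"
  have "x < nverts" "Suc l < 2 * m"
    using assms lo_le[of y] block_start_block_le[of y] block_less_2m[of y]
    unfolding l_def by linarith+
  then have pos: "0 < N" "0 < N'" and "t < N"
    using block_size_pos offset_less unfolding N_def N'_def t_def l_def by auto
  have x: "real x = block_start l + t" and y: "real y = block_start l + N + t'"
    using block_start_block_le[of x] block_start_block_le[of y] assms(3)
    unfolding offset_def l_def t_def t'_def N_def by (simp_all add: block_start_Suc)
  have "lo y = block_start l + N - t' * N / N'"
    unfolding lo_def prev_block_size_def using assms(3)
    by (simp add: l_def N_def N'_def t'_def block_start_Suc)
  moreover have "hi x = block_start l + N + (N - real t) * N' / N"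
    unfolding hi_def using \<open>t < N\<close>
    by (simp add: l_def N_def N'_def t_def block_start_Suc of_nat_diff)
  ultimately have "t' * N / N' < N - real t"
    using assms(1) x by simp
  then have "t' < (N - real t) * N' / N"
    using pos by (simp add: field_simps)
  then show ?thesis
    using \<open>hi x = _\<close> y by simp
qed

lemma block_le_label: "x \<le> y \<Longrightarrow> block x \<le> label x y"
  unfolding label_def using block_mono by auto

lemma label_le_block:
  assumes "x < y" "y < nverts"
  shows "label x y \<le> block y"
proof -
  have "Suc (block x) \<le> block y" if "hi x \<le> y"
    using that hi_ge[of x] assms(2) by (intro block_ge_nverts) simp_all
  then show ?thesis
    unfolding label_def using block_mono[of x y] assms(1) by auto
qed

lemma label_less_block:
  assumes "real x < lo y" "y < nverts"
  shows "label x y < block y"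
proof -
  have "block x < block y"
    using assms(1) lo_le[of y] by (intro block_less) simp
  moreover have "block y \<noteq> Suc (block x)" if "hi x \<le> y"
    using lo_hi_inverse[OF assms] that by auto
  ultimately show ?thesis
    using assms(1) unfolding label_def by auto
qed

lemma block_less_label:
  assumes "hi y \<le> real z" "z < nverts"
  shows "block y < label y z"
proof -
  have "Suc (block y) \<le> block z"
    using assms hi_ge[of y] by (intro block_ge_nverts) simp_all
  then show ?thesis
    using assms(1) unfolding label_def by auto
qed

lemma nonincreasing_triple_window:
  assumes "(x, y, z) \<in> nonincreasing_triples nverts label"
  shows "lo y \<le> x" "z < hi y"
proof -
  have xyz: "x < y" "y < z" "z < nverts" "label y z \<le> label x y"
    using assms unfolding nonincreasing_triples_def by auto
  show "lo y \<le> x"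
    using label_less_block[of x y] block_le_label[of y z] xyz by fastforce
  show "z < hi y"
    using block_less_label[of y z] label_le_block[of x y] xyz by fastforce
qed

lemma increasing_edges_tight_path_free:
  "\<not> ocontains (n, increasing_edges nverts label) (tight_path (2 * m + 2))"
proof (rule not_ocontains_tight_path_if_increasing_labels)
  show "0 < 2 * m" using m_pos by simp
  fix x y z assume xyz: "x < y" "y < z" "{x, y, z} \<in> increasing_edges nverts label"
  then have "label y z \<le> block z"
    using increasing_edgesD(2) by (intro label_le_block)
  then show "label x y < label y z \<and> label y z < 2 * m"
    using increasing_edgesD(1)[OF xyz] block_less_2m[of z] by simp
qed

definition lower_window :: "nat \<Rightarrow> nat set" where
  "lower_window y = {x. lo y \<le> real x \<and> real x < real y}"

definition upper_window :: "nat \<Rightarrow> nat set" where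
  "upper_window y = {z. real y + 1 \<le> real z \<and> real z < hi y}"

lemma card_window_product_le:
  assumes "y < nverts"
  shows "real (card (lower_window y) * card (upper_window y)) \<le> (y - lo y + 1) * (hi y - y)"
proof -
  have "lo y \<le> y" "real y + 1 \<le> hi y"
    using lo_le[of y] block_start_block_le[of y] hi_ge[of y] less_block_start_Suc_block[OF assms]
    by linarith+
  then have "real (card (lower_window y)) \<le> y - lo y + 1"
    and "real (card (upper_window y)) \<le> hi y - y"
    using card_nat_in_real_interval_le[of "lo y" y]
      card_nat_in_real_interval_le[of "real y + 1" "hi y"]
    unfolding lower_window_def upper_window_def by simp_all
  then show ?thesis
    by (simp add: mult_mono)
qed

lemma window_product_in_block:
  fixes N :: real
  assumes "l < 2 * m" "t < block_size l"
  defines "N \<equiv> block_size l"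
  shows "(real (block_start l + t) - lo (block_start l + t) + 1)
      * (hi (block_start l + t) - real (block_start l + t))
    = (t * (N + prev_block_size l) / N + 1) * ((N - t) * (N + block_size (Suc l)) / N)"
proof -
  have in_block: "block (block_start l + t) = l" and at_offset: "offset (block_start l + t) = t"
    using assms block_eq[of l "block_start l + t"] unfolding offset_def
    by (simp_all add: block_start_Suc)
  have "0 < N" using block_size_pos assms unfolding N_def by simp
  then show ?thesis
    unfolding lo_def hi_def in_block at_offset N_def using assms(2)
    by (simp add: field_simps of_nat_diff block_start_Suc)
qed

lemma sum_window_products_in_block_le:
  fixes N :: real
  assumes "l < 2 * m"
  defines "N \<equiv> block_size l"
  shows "(\<Sum>t<block_size l.
      (t * (N + prev_block_size l) / N + 1) * ((N - t) * (N + block_size (Suc l)) / N))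
    \<le> real M ^ 3 * weight l * (m * (m + 1)) / 6 + (real (m + 1) * M) ^ 2"
proof -
  have "(\<Sum>t<block_size l.
      (t * (N + prev_block_size l) / N + 1) * ((N - t) * (N + block_size (Suc l)) / N))
      \<le> N * (N + prev_block_size l) * (N + block_size (Suc l)) / 6
        + (N + block_size (Suc l)) * (N + 1) / 2"
    unfolding N_def using block_size_pos[OF assms(1)] by (intro sum_affine_products_le) simp_all
  also have "N * (N + prev_block_size l) * (N + block_size (Suc l))
      = real M ^ 3 * weight l * (m * (m + 1))"
  proof -
    define p where "p = (if l = 0 then 0 else weight (l - 1))"
    have "prev_block_size l = p * M"
      unfolding prev_block_size_def block_size_def p_def by simp
    then have "N * (N + prev_block_size l) * (N + block_size (Suc l))
        = real M ^ 3 * weight l * ((real (weight l) + p) * (weight l + weight (Suc l)))"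
      unfolding N_def block_size_def by (simp add: algebra_simps power3_eq_cube)
    also have "(real (weight l) + p) * (weight l + weight (Suc l)) = m * (m + 1)"
      using weight_neighbours_product[OF assms(1)] unfolding p_def
      by (metis of_nat_add of_nat_mult of_nat_1)
    finally show ?thesis .
  qed
  also have "(N + block_size (Suc l)) * (N + 1) / 2 \<le> (real (m + 1) * M) ^ 2"
  proof -
    have "block_size l + block_size (Suc l) \<le> (m + 1) * M" "1 \<le> (m + 1) * M"
      using mult_le_mono1[OF weight_adjacent_le[OF assms(1)], of M] M_pos
      unfolding block_size_def by (simp_all add: add_mult_distrib)
    then have "N + block_size (Suc l) \<le> real (m + 1) * M" "1 \<le> real (m + 1) * M"
      unfolding N_def
      by (metis of_nat_add of_nat_le_iff of_nat_mult, metis of_nat_1 of_nat_le_iff of_nat_mult)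
    then have "N + block_size (Suc l) \<le> real (m + 1) * M" "N + 1 \<le> 2 * (real (m + 1) * M)"
      by simp_all
    then have "(N + block_size (Suc l)) * (N + 1) \<le> (real (m + 1) * M) * (2 * (real (m + 1) * M))"
      unfolding N_def by (intro mult_mono) simp_all
    then show ?thesis
      by (simp add: power2_eq_square)
  qed
  finally show ?thesis by simp
qed

lemma sum_window_products_le:
  "(\<Sum>y<nverts. real (card (lower_window y) * card (upper_window y)))
    \<le> real nverts ^ 3 / (6 * (m * (m + 1))) + 2 * real nverts ^ 2"
proof -
  define D where "D = real m * (m + 1)"
  have "(\<Sum>y<nverts. real (card (lower_window y) * card (upper_window y)))
      \<le> (\<Sum>y<nverts. (y - lo y + 1) * (hi y - y))"
    by (intro sum_mono card_window_product_le) simp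
  also have "\<dots> = (\<Sum>l<2 * m. \<Sum>t<block_size l.
      (real (block_start l + t) - lo (block_start l + t) + 1)
        * (hi (block_start l + t) - real (block_start l + t)))"
    unfolding nverts_def block_start_def by (rule sum_lessThan_blocks)
  also have "\<dots> = (\<Sum>l<2 * m. \<Sum>t<block_size l.
      (t * (real (block_size l) + prev_block_size l) / block_size l + 1)
        * ((real (block_size l) - t) * (real (block_size l) + block_size (Suc l)) / block_size l))"
    by (intro sum.cong refl window_product_in_block) auto
  also have "\<dots> \<le> (\<Sum>l<2 * m. real M ^ 3 * D / 6 * weight l + (real (m + 1) * M) ^ 2)"
    using sum_window_products_in_block_le unfolding D_def
    by (intro sum_mono) (simp add: algebra_simps)
  also have "\<dots> = real M ^ 3 * D / 6 * (\<Sum>l<2 * m. real (weight l))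
      + 2 * m * (real (m + 1) * M) ^ 2"
    by (simp add: sum.distrib sum_distrib_left)
  also have "(\<Sum>l<2 * m. real (weight l)) = D"
    using sum_weight[of m] unfolding D_def by (simp add: algebra_simps flip: of_nat_sum)
  also have "real M ^ 3 * D / 6 * D + 2 * m * (real (m + 1) * M) ^ 2
      \<le> real nverts ^ 3 / (6 * (m * (m + 1))) + 2 * real nverts ^ 2"
  proof -
    have nverts: "real nverts = D * M" "real nverts = m * (real (m + 1) * M)"
      using nverts_eq unfolding D_def by (simp_all add: algebra_simps)
    have "0 < D"
      using m_pos unfolding D_def by simp
    then have "real M ^ 3 * D / 6 * D = real nverts ^ 3 / (6 * (m * (m + 1)))"
      unfolding nverts(1) D_def by (simp add: field_simps power3_eq_cube)
    moreover have "m * (real (m + 1) * M) ^ 2 \<le> (real m * m) * (real (m + 1) * M) ^ 2"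
      using m_pos by (intro mult_right_mono) simp_all
    then have "2 * m * (real (m + 1) * M) ^ 2 \<le> 2 * real nverts ^ 2"
      unfolding nverts(2) by (simp add: power_mult_distrib power2_eq_square[of "real m"])
    ultimately show ?thesis
      by linarith
  qed
  finally show ?thesis .
qed

lemma card_nonincreasing_triples_le:
  "real (card (nonincreasing_triples nverts label))
    \<le> real nverts ^ 3 / (6 * (m * (m + 1))) + 2 * real nverts ^ 2"
proof -
  have "card (nonincreasing_triples nverts label)
      \<le> (\<Sum>y<nverts. card (lower_window y) * card (upper_window y))"
  proof (rule card_triples_le_sum_windows)
    fix x y z assume xyz: "(x, y, z) \<in> nonincreasing_triples nverts label"
    then show "y < nverts \<and> x \<in> lower_window y \<and> z \<in> upper_window y"
      using nonincreasing_triple_window[OF xyz]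
      unfolding nonincreasing_triples_def lower_window_def upper_window_def by auto
  qed (simp_all add: lower_window_def upper_window_def finite_nat_in_real_interval)
  then have "real (card (nonincreasing_triples nverts label))
      \<le> (\<Sum>y<nverts. real (card (lower_window y) * card (upper_window y)))"
    by (metis of_nat_le_iff of_nat_sum)
  then show ?thesis
    using sum_window_products_le by linarith
qed

lemma ex3_ge_nverts:
  assumes "nverts \<le> n"
  shows "real (nverts choose 3) - real nverts ^ 3 / (6 * (m * (m + 1))) - 2 * real nverts ^ 2
    \<le> real (ex3 n (tight_path (2 * m + 2)))"
proof -
  have "card (increasing_edges nverts label) \<le> ex3 n (tight_path (2 * m + 2))"
    using assms
    by (intro ex3_ge_card hypergraph3_increasing_edges increasing_edges_tight_path_free)
  then show ?thesis
    using card_increasing_edges_ge[of nverts label] card_nonincreasing_triples_le by linarith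
qed

end

lemma ex3_tight_path_ge:
  fixes m n :: nat
  assumes "0 < m" "m * (m + 1) \<le> n"
  shows "(1 - 1 / real (m * (m + 1))) * real (n choose 3) - (real (m * (m + 1)) + 3) * real n ^ 2
    \<le> real (ex3 n (tight_path (2 * m + 2)))"
proof -
  define D where "D = m * (m + 1)"
  have "0 < D" "D \<le> n"
    using assms unfolding D_def by simp_all
  then have "0 < n div D"
    by (simp add: div_greater_zero_iff)
  then interpret path_free_construction m "n div D"
    using assms(1) by unfold_locales
  have "nverts = n div D * D"
    using nverts_eq unfolding D_def by simp
  then have "nverts \<le> n" "n < nverts + D"
    using div_mult_mod_eq[of n D] mod_less_divisor[OF \<open>0 < D\<close>, of n] by linarith+
  then have "(1 - 1 / D) * (n * (real n - 1) * (real n - 2) / 6) - (real D + 3) * real n ^ 2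
      \<le> nverts * (real nverts - 1) * (real nverts - 2) / 6 - real nverts ^ 3 / (6 * real D)
        - 2 * real nverts ^ 2"
    using \<open>0 < D\<close> \<open>D \<le> n\<close> by (intro cubic_shift_bound) simp_all
  also have "\<dots> \<le> real (ex3 n (tight_path (2 * m + 2)))"
    using ex3_ge_nverts[OF \<open>nverts \<le> n\<close>] unfolding real_choose_three D_def by simp
  finally show ?thesis
    unfolding real_choose_three D_def .
qed

theorem corollary4p6:
  fixes s :: nat
  assumes "s \<ge> 4" and "even s"
  shows "\<exists>g :: nat \<Rightarrow> real. g \<longlonglongrightarrow> 0 \<and>
    (\<forall>\<^sub>F n in sequentially.
       real (ex3 n (tight_path s)) \<ge>
         (1 - 4 / (real (s - 2) * real s) + g n) * real (n choose 3))"
proof -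
  obtain m where s: "s = 2 * m + 2" and "0 < m"
  proof -
    obtain k where "s = 2 * k"
      using assms(2) by blast
    with assms(1) show ?thesis
      using that[of "k - 1"] by simp
  qed
  define D where "D = real (m * (m + 1))"
  have "real (s - 2) * real s = 4 * D"
    unfolding s D_def by (simp add: algebra_simps)
  then have "4 / (real (s - 2) * real s) = 1 / D"
    by simp
  define g where "g n = - (D + 3) * (real n ^ 2 / real (n choose 3))" for n
  have "g \<longlonglongrightarrow> 0"
    unfolding g_def by (intro tendsto_mult_right_zero square_over_choose_three_tendsto_zero)
  moreover have
    "(1 - 4 / (real (s - 2) * real s) + g n) * real (n choose 3) \<le> real (ex3 n (tight_path s))"
    if "m * (m + 1) + 3 \<le> n" for n
  proof -
    have "0 < real (n choose 3)"
      using that by simp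
    then have "(1 - 4 / (real (s - 2) * real s) + g n) * real (n choose 3)
        = (1 - 1 / D) * real (n choose 3) - (D + 3) * real n ^ 2"
      unfolding \<open>4 / _ = 1 / D\<close> g_def by (simp add: field_simps)
    also have "\<dots> \<le> real (ex3 n (tight_path s))"
      unfolding s D_def using \<open>0 < m\<close> that by (intro ex3_tight_path_ge) simp_all
    finally show ?thesis .
  qed
  ultimately show ?thesis
    by (auto intro!: exI[of _ g] eventually_sequentiallyI[of "m * (m + 1) + 3"])
qed

end
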